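(* Let $q$ be a prime power, $\eta\ge0$ an integer, $(\delta_T,\delta_X)\in\mathbb{Z}\times\mathbb{N}$ with $\delta=\delta_T+\eta\delta_X\ge0$. Let $M=T_1^{c_1}T_2^{c_2}X_1^{d_1}X_2^{d_2}$ and $M'=T_1^{c'_1}T_2^{c'_2}X_1^{d'_1}X_2^{d'_2}$ be two monomials of bidegree $(\delta_T,\delta_X)$. Then $\mathrm{ev}_{(\delta_T,\delta_X)}(M)=\mathrm{ev}_{(\delta_T,\delta_X)}(M')$ if and only if, for all $i,j\in\{1,2\}$: $q-1$ divides $d_i-d'_i$; $q-1$ divides $c_j-c'_j$; $d_i=0\Leftrightarrow d'_i=0$; and $c_j=0\Leftrightarrow c'_j=0$.
   Context: $R=\mathbb{F}_q[T_1,T_2,X_1,X_2]$; the bidegree of $T_1^{c_1}T_2^{c_2}X_1^{d_1}X_2^{d_2}$ is $(c_1+c_2-\eta d_1,d_1+d_2)$; $R(\delta_T,\delta_X)$ is the span of monomials of bidegree $(\delta_T,\delta_X)$. The Hirzebruch surface $\mathcal{H}_\eta$ is the quotient of $(\mathbb{A}^2\setminus\{0\})^2$ by $\mathbb{G}_m^2$ acting by $(\lambda,\mu)\cdot(t_1,t_2,x_1,x_2)=(\lambda t_1,\lambda t_2,\mu\lambda^{-\eta}x_1,\mu x_2)$; each of its $(q+1)^2$ $\mathbb{F}_q$-points $P$ has a unique representative of the form $(1,a,1,b)$, $(0,1,1,b)$, $(1,a,0,1)$ or $(0,1,0,1)$ ($a,b\in\mathbb{F}_q$), and $F(P)$ is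 $F$ evaluated there. $\mathrm{ev}_{(\delta_T,\delta_X)}(F)=(F(P))_{P\in\mathcal{H}_\eta(\mathbb{F}_q)}$. *)

theory Defs
  imports Main "HOL-Library.Cardinality"
begin

text \<open>The base field F_q is modelled as a finite field type 'a, with q = CARD('a).
  A monomial T1^c1 T2^c2 X1^d1 X2^d2 is represented by its exponent vector (c1,c2,d1,d2).\<close>

type_synonym expo = "nat \<times> nat \<times> nat \<times> nat"

definition hirz_bideg :: "nat \<Rightarrow> expo \<Rightarrow> int \<times> nat" where
  "hirz_bideg \<eta> m = (case m of (c1, c2, d1, d2) \<Rightarrow>
      (int c1 + int c2 - int \<eta> * int d1, d1 + d2))"

text \<open>Normalized representatives of the F_q-points of the Hirzebruch surface:
  (1,a,1,b), (0,1,1,b), (1,a,0,1), (0,1,0,1).\<close>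
definition hirz_points :: "('a::{finite,field} \<times> 'a \<times> 'a \<times> 'a) set" where
  "hirz_points =
     {(1, a, 1, b) | a b. True} \<union> {(0, 1, 1, b) | b. True} \<union>
     {(1, a, 0, 1) | a. True} \<union> {(0, 1, 0, 1)}"

definition mono_eval :: "expo \<Rightarrow> ('a::field \<times> 'a \<times> 'a \<times> 'a) \<Rightarrow> 'a" where
  "mono_eval m P = (case m of (c1, c2, d1, d2) \<Rightarrow> case P of (t1, t2, x1, x2) \<Rightarrow>
      t1 ^ c1 * t2 ^ c2 * x1 ^ d1 * x2 ^ d2)"

definition hirz_ev :: "expo \<Rightarrow> ('a::{finite,field} \<times> 'a \<times> 'a \<times> 'a) \<Rightarrow> 'a" where
  "hirz_ev m = (\<lambda>P. if P \<in> hirz_points then mono_eval m P else 0)"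

end

theory Submission
  imports Defs "HOL-Computational_Algebra.Polynomial"
begin

text \<open>On the normalized representatives the monomial T1^c1 T2^c2 X1^d1 X2^d2 evaluates to a^c2 b^d2,
  0^c1 b^d2, a^c2 0^d1 and 0^c1 0^d1, so its evaluation vector records exactly the maps
  a \<mapsto> a^c2 and b \<mapsto> b^d2 on F_q and whether c1 and d1 vanish. Two power maps on F_q agree
  iff the exponents are both zero or both nonzero and congruent modulo q - 1: the nonzero
  elements satisfy x^(q-1) = 1, and no smaller positive exponent kills all of them, since
  X^r - 1 has at most r roots. The divisibility conditions for c1 and d1 then follow from
  those for c2 and d2 because both monomials have the same bidegree.\<close>

lemma card_field_ge_2: "CARD('a::{finite,field}) \<ge> 2"
proof -
  have "card {0::'a, 1} \<le> CARD('a)"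
    by (intro card_mono) auto
  then show ?thesis by simp
qed

lemma power_card_minus_one_eq_1:
  fixes x :: "'a::{finite,field}"
  assumes "x \<noteq> 0"
  shows "x ^ (CARD('a) - 1) = 1"
proof -
  let ?U = "UNIV - {0::'a}"
  have inj: "inj_on ((*) x) ?U"
    using assms by (auto simp: inj_on_def)
  have img: "(*) x ` ?U = ?U"
  proof
    show "(*) x ` ?U \<subseteq> ?U" using assms by auto
    show "?U \<subseteq> (*) x ` ?U"
    proof
      fix y assume "y \<in> ?U"
      then have "y = x * (y / x)" "y / x \<in> ?U" using assms by auto
      then show "y \<in> (*) x ` ?U" by blast
    qed
  qed
  have "x ^ card ?U * prod id ?U = (\<Prod>y\<in>?U. x * y)"
    by (simp add: prod.distrib)
  also have "\<dots> = prod id ?U"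
    using prod.reindex[OF inj, of id] img by simp
  finally have "x ^ card ?U = 1"
    by simp
  then show ?thesis by (simp add: card_Diff_singleton)
qed

lemma power_eq_power_mod_card_minus_one:
  fixes x :: "'a::{finite,field}"
  assumes "x \<noteq> 0"
  shows "x ^ n = x ^ (n mod (CARD('a) - 1))"
proof -
  let ?m = "CARD('a) - 1"
  have "x ^ n = x ^ (?m * (n div ?m) + n mod ?m)"
    by simp
  also have "\<dots> = (x ^ ?m) ^ (n div ?m) * x ^ (n mod ?m)"
    by (simp only: power_add power_mult)
  finally show ?thesis
    by (simp only: power_card_minus_one_eq_1[OF assms] power_one mult_1)
qed

lemma ex_nonzero_power_neq_1:
  assumes "0 < r" "r < CARD('a::{finite,field}) - 1"
  shows "\<exists>x::'a. x \<noteq> 0 \<and> x ^ r \<noteq> 1"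
proof (rule ccontr)
  assume no_witness: "\<nexists>x::'a. x \<noteq> 0 \<and> x ^ r \<noteq> 1"
  define p :: "'a poly" where "p = monom 1 r - 1"
  have deg: "degree p \<le> r"
    unfolding p_def by (intro degree_diff_le) (simp_all add: degree_monom_le)
  have "coeff p r = 1"
    using assms(1) by (simp add: p_def)
  then have "p \<noteq> 0"
    by auto
  have "UNIV - {0} \<subseteq> {x. poly p x = 0}"
    using no_witness by (auto simp: p_def poly_monom)
  then have "card (UNIV - {0::'a}) \<le> card {x. poly p x = 0}"
    by (intro card_mono) auto
  also have "\<dots> \<le> r"
    using card_poly_roots_bound[OF \<open>p \<noteq> 0\<close>] deg by simp
  finally show False
    using assms(2) by (simp add: card_Diff_singleton)
qed

lemma nonzero_power_eq_iff_mod: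
  "(\<forall>x::'a::{finite,field}. x \<noteq> 0 \<longrightarrow> x ^ a = x ^ b) \<longleftrightarrow>
     a mod (CARD('a) - 1) = b mod (CARD('a) - 1)"
proof -
  let ?m = "CARD('a) - 1"
  have m: "?m > 0" using card_field_ge_2[where 'a='a] by simp
  have distinct: "\<exists>x::'a. x \<noteq> 0 \<and> x ^ r \<noteq> x ^ s" if "r < s" "s < ?m" for r s
  proof -
    have "0 < s - r" "s - r < ?m"
      using that by auto
    then obtain x :: 'a where x: "x \<noteq> 0" "x ^ (s - r) \<noteq> 1"
      using ex_nonzero_power_neq_1 by blast
    have "x ^ s = x ^ r * x ^ (s - r)"
      using that(1) by (simp flip: power_add)
    with x have "x ^ r \<noteq> x ^ s"
      by simp
    with x(1) show ?thesis by blast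
  qed
  have "(\<forall>x::'a. x \<noteq> 0 \<longrightarrow> x ^ a = x ^ b) \<longleftrightarrow>
      (\<forall>x::'a. x \<noteq> 0 \<longrightarrow> x ^ (a mod ?m) = x ^ (b mod ?m))"
    using power_eq_power_mod_card_minus_one[where 'a='a and n = a]
      power_eq_power_mod_card_minus_one[where 'a='a and n = b]
    by simp
  also have "\<dots> \<longleftrightarrow> a mod ?m = b mod ?m"
  proof
    assume same: "\<forall>x::'a. x \<noteq> 0 \<longrightarrow> x ^ (a mod ?m) = x ^ (b mod ?m)"
    have "a mod ?m < ?m" "b mod ?m < ?m"
      using m by simp_all
    show "a mod ?m = b mod ?m"
    proof (rule linorder_cases)
      assume "a mod ?m < b mod ?m"
      with distinct[of "a mod ?m" "b mod ?m"] same \<open>b mod ?m < ?m\<close> show ?thesis by auto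
    next
      assume "b mod ?m < a mod ?m"
      with distinct[of "b mod ?m" "a mod ?m"] same \<open>a mod ?m < ?m\<close> show ?thesis by auto
    qed
  qed simp
  finally show ?thesis .
qed

lemma power_eq_power_iff:
  "(\<forall>x::'a::{finite,field}. x ^ a = x ^ b) \<longleftrightarrow>
     (a = 0 \<longleftrightarrow> b = 0) \<and> (int CARD('a) - 1) dvd (int a - int b)"
proof -
  let ?m = "CARD('a) - 1"
  have "int CARD('a) - 1 = int ?m"
    using card_field_ge_2[where 'a='a] by simp
  moreover have "a mod ?m = b mod ?m \<longleftrightarrow> int a mod int ?m = int b mod int ?m"
    by (metis of_nat_eq_iff of_nat_mod)
  ultimately have "a mod ?m = b mod ?m \<longleftrightarrow> (int CARD('a) - 1) dvd (int a - int b)"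
    by (simp add: mod_eq_dvd_iff)
  moreover have "(\<forall>x::'a. x ^ a = x ^ b) \<longleftrightarrow>
      (0::'a) ^ a = 0 ^ b \<and> (\<forall>x::'a. x \<noteq> 0 \<longrightarrow> x ^ a = x ^ b)"
    by metis
  ultimately show ?thesis
    by (simp add: nonzero_power_eq_iff_mod power_0_left)
qed

lemma hirz_ev_eq_iff:
  "(hirz_ev (c1, c2, d1, d2) = (hirz_ev (c1', c2', d1', d2')
       :: 'a::{finite,field} \<times> 'a \<times> 'a \<times> 'a \<Rightarrow> 'a)) \<longleftrightarrow>
     (\<forall>x::'a. x ^ c2 = x ^ c2') \<and> (\<forall>x::'a. x ^ d2 = x ^ d2') \<and>
     (c1 = 0 \<longleftrightarrow> c1' = 0) \<and> (d1 = 0 \<longleftrightarrow> d1' = 0)"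
  (is "?ev \<longleftrightarrow> ?pow")
proof
  assume ev: ?ev
  have eval: "mono_eval (c1, c2, d1, d2) P = mono_eval (c1', c2', d1', d2') P"
    if "P \<in> (hirz_points :: ('a \<times> 'a \<times> 'a \<times> 'a) set)" for P
    using fun_cong[OF ev, of P] that by (simp add: hirz_ev_def)
  have "(1, a, 1, b) \<in> (hirz_points :: ('a \<times> 'a \<times> 'a \<times> 'a) set)"
    "(0, 1, 1, 1) \<in> (hirz_points :: ('a \<times> 'a \<times> 'a \<times> 'a) set)"
    "(1, 1, 0, 1) \<in> (hirz_points :: ('a \<times> 'a \<times> 'a \<times> 'a) set)" for a b :: 'a
    by (auto simp: hirz_points_def)
  from eval[OF this(1)] eval[OF this(2)] eval[OF this(3)]
  have "a ^ c2 * b ^ d2 = a ^ c2' * b ^ d2'" "(0::'a) ^ c1 = 0 ^ c1'" "(0::'a) ^ d1 = 0 ^ d1'"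
    for a b :: 'a
    by (simp_all add: mono_eval_def)
  from this(1)[of _ 1] this(1)[of 1] this(2,3) show ?pow
    by (simp add: power_0_left split: if_splits)
next
  assume pow: ?pow
  then have "(0::'a) ^ c1 = 0 ^ c1'" "(0::'a) ^ d1 = 0 ^ d1'"
    by (simp_all add: power_0_left)
  with pow have "mono_eval (c1, c2, d1, d2) P = mono_eval (c1', c2', d1', d2') P"
    if "P \<in> hirz_points" for P :: "'a \<times> 'a \<times> 'a \<times> 'a"
    using that unfolding hirz_points_def mono_eval_def by auto
  then show ?ev
    unfolding hirz_ev_def by (intro ext) simp
qed

lemma hirz_bideg_eq_diffs:
  assumes "hirz_bideg \<eta> (c1, c2, d1, d2) = hirz_bideg \<eta> (c1', c2', d1', d2')"
  shows "int d1 - int d1' = - (int d2 - int d2')"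
    and "int c1 - int c1' = int \<eta> * (int d1 - int d1') - (int c2 - int c2')"
  using assms by (auto simp: hirz_bideg_def algebra_simps)

theorem proposition2p7:
  fixes \<eta> :: nat and \<delta>T :: int and \<delta>X :: nat
    and c1 c2 d1 d2 c1' c2' d1' d2' :: nat
  assumes "\<delta>T + int \<eta> * int \<delta>X \<ge> 0"
    and "hirz_bideg \<eta> (c1, c2, d1, d2) = (\<delta>T, \<delta>X)"
    and "hirz_bideg \<eta> (c1', c2', d1', d2') = (\<delta>T, \<delta>X)"
  shows "(hirz_ev (c1, c2, d1, d2) = (hirz_ev (c1', c2', d1', d2')
            :: 'a::{finite,field} \<times> 'a \<times> 'a \<times> 'a \<Rightarrow> 'a))
    \<longleftrightarrow>
    ((int (CARD('a)) - 1) dvd (int d1 - int d1') \<and> (int (CARD('a)) - 1) dvd (int d2 - int d2') \<and>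
     (int (CARD('a)) - 1) dvd (int c1 - int c1') \<and> (int (CARD('a)) - 1) dvd (int c2 - int c2') \<and>
     (d1 = 0 \<longleftrightarrow> d1' = 0) \<and> (d2 = 0 \<longleftrightarrow> d2' = 0) \<and>
     (c1 = 0 \<longleftrightarrow> c1' = 0) \<and> (c2 = 0 \<longleftrightarrow> c2' = 0))"
proof -
  let ?Q = "int (CARD('a)) - 1"
  have bideg: "hirz_bideg \<eta> (c1, c2, d1, d2) = hirz_bideg \<eta> (c1', c2', d1', d2')"
    using assms(2,3) by simp
  have d1: "?Q dvd (int d1 - int d1') \<longleftrightarrow> ?Q dvd (int d2 - int d2')"
    by (metis hirz_bideg_eq_diffs(1)[OF bideg] dvd_minus_iff)
  have c1: "?Q dvd (int c1 - int c1')"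
    if "?Q dvd (int d1 - int d1')" "?Q dvd (int c2 - int c2')"
    unfolding hirz_bideg_eq_diffs(2)[OF bideg] using that by simp
  show ?thesis
    unfolding hirz_ev_eq_iff power_eq_power_iff using d1 c1 by blast
qed

end
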